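(* Let $d\in\mathbb{N}$, $k\in\{1,\dots,d\}$, $\varepsilon>0$, and $\mathbf{e}_1,\mathbf{e}_2\in\mathbb{R}^d$. Define $$\psi_{sign}(\mathbf{e}_2):=\begin{cases}\max_{i\notin\mathrm{TopFeatures}(\mathbf{e}_1;k)}|e_{2i}| & (k<d),\\ 0 & (k=d),\end{cases}$$ and $$\ell_{\mathrm{Sgn}}(\mathbf{e}_2;\mathbf{e}_1,k):=\frac1k\sum_{i\in\mathrm{TopFeatures}(\mathbf{e}_1;k)}\max\big(0,\ \psi_{sign}(\mathbf{e}_2)-\mathrm{sign}(e_{1i})\,e_{2i}+\varepsilon\big).$$ Then $$1-\mathrm{SignAgree}(\mathbf{e}_1,\mathbf{e}_2;k)\le\varepsilon^{-1}\,\ell_{\mathrm{Sgn}}(\mathbf{e}_2;\mathbf{e}_1,k).$$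
   Context: $\mathrm{sign}(x):=1$ if $x\ge0$ and $-1$ otherwise. For $\mathbf{x}\in\mathbb{R}^d$, $\mathrm{rank}(\mathbf{x},i)$ denotes the position of index $i$ when indices are ordered by descending $|x_i|$, i.e. $|\{j\in[d]:|x_j|\ge|x_i|\}|$, with ties broken so that ranks form a permutation of $[d]$ (paper's convention: if $|x_i|=|x_j|$ with $i>j$ then $\mathrm{rank}(\mathbf{x},j)=\mathrm{rank}(\mathbf{x},i)+1$). $\mathrm{TopFeatures}(\mathbf{x};k):=\{i\in[d]:\mathrm{rank}(\mathbf{x},i)\le k\}$. The top-$k$ sign agreement is $\mathrm{SignAgree}(\mathbf{e}_1,\mathbf{e}_2;k):=\frac1k\big|\{i\in[d]: i\in\mathrm{TopFeatures}(\mathbf{e}_1;k)\wedge i\in\mathrm{TopFeatures}(\mathbf{e}_2;k)\wedge\mathrm{sign}(e_{1i})=\mathrm{sign}(e_{2i})\}\big|$. *)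

theory Defs
  imports Complex_Main
begin

text \<open>Vectors in R^d are functions nat => real, indexed by [d] = {1..d}.\<close>

definition sign :: "real \<Rightarrow> real" where
  "sign x = (if x \<ge> 0 then 1 else -1)"

text \<open>Rank with the paper's tie-breaking: among equal magnitudes, the larger index
  gets the smaller rank. rank(x,i) = #{j. |x_j| > |x_i|} + #{j >= i. |x_j| = |x_i|}.\<close>
definition rank :: "nat \<Rightarrow> (nat \<Rightarrow> real) \<Rightarrow> nat \<Rightarrow> nat" where
  "rank d x i = card {j \<in> {1..d}. \<bar>x j\<bar> > \<bar>x i\<bar> \<or> (\<bar>x j\<bar> = \<bar>x i\<bar> \<and> j \<ge> i)}"

definition TopFeatures :: "nat \<Rightarrow> (nat \<Rightarrow> real) \<Rightarrow> nat \<Rightarrow> nat set" where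
  "TopFeatures d x k = {i \<in> {1..d}. rank d x i \<le> k}"

definition SignAgree :: "nat \<Rightarrow> (nat \<Rightarrow> real) \<Rightarrow> (nat \<Rightarrow> real) \<Rightarrow> nat \<Rightarrow> real" where
  "SignAgree d e1 e2 k = real (card {i \<in> {1..d}. i \<in> TopFeatures d e1 k \<and> i \<in> TopFeatures d e2 k
        \<and> sign (e1 i) = sign (e2 i)}) / real k"

definition psi_sign :: "nat \<Rightarrow> (nat \<Rightarrow> real) \<Rightarrow> nat \<Rightarrow> (nat \<Rightarrow> real) \<Rightarrow> real" where
  "psi_sign d e1 k e2 = (if k < d then Max ((\<lambda>i. \<bar>e2 i\<bar>) ` ({1..d} - TopFeatures d e1 k)) else 0)"

definition loss_Sgn :: "nat \<Rightarrow> real \<Rightarrow> (nat \<Rightarrow> real) \<Rightarrow> (nat \<Rightarrow> real) \<Rightarrow> nat \<Rightarrow> real" where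
  "loss_Sgn d \<epsilon> e2 e1 k = (1 / real k) * (\<Sum>i \<in> TopFeatures d e1 k.
        max 0 (psi_sign d e1 k e2 - sign (e1 i) * e2 i + \<epsilon>))"

end

theory Submission
  imports Defs
begin

text \<open>Every top-k feature i of e1 that does not count as an agreement has
  sign(e1 i) e2 i \<le> \<psi>, so its hinge term is at least \<epsilon>. If the signs differ,
  sign(e1 i) e2 i \<le> 0 \<le> \<psi>. If they agree, i is not a top-k feature of e2, so more
  than k indices outrank i for e2; one of them lies outside TopFeatures(e1; k), and its
  magnitude is at least |e2 i| and at most \<psi>. Summing the hinge terms gives
  \<epsilon> (k - #agreements) \<le> k \<ell>_Sgn.\<close>

definition ranked_above :: "nat \<Rightarrow> (nat \<Rightarrow> real) \<Rightarrow> nat \<Rightarrow> nat set" where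
  "ranked_above d x i = {j \<in> {1..d}. \<bar>x j\<bar> > \<bar>x i\<bar> \<or> (\<bar>x j\<bar> = \<bar>x i\<bar> \<and> j \<ge> i)}"

lemma rank_eq_card_ranked_above: "rank d x i = card (ranked_above d x i)"
  unfolding rank_def ranked_above_def ..

lemma finite_ranked_above: "finite (ranked_above d x i)"
  unfolding ranked_above_def by simp

lemma ranked_above_subset: "ranked_above d x i \<subseteq> {1..d}"
  unfolding ranked_above_def by blast

lemma self_in_ranked_above: "i \<in> {1..d} \<Longrightarrow> i \<in> ranked_above d x i"
  unfolding ranked_above_def by simp

lemma ranked_above_trans: "j \<in> ranked_above d x i \<Longrightarrow> ranked_above d x j \<subseteq> ranked_above d x i"
  unfolding ranked_above_def by auto

lemma rank_le: "rank d x i \<le> d"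
  using card_mono[OF _ ranked_above_subset] by (simp add: rank_eq_card_ranked_above)

lemma rank_in_range: "i \<in> {1..d} \<Longrightarrow> rank d x i \<in> {1..d}"
  using self_in_ranked_above[of i d x] finite_ranked_above[of d x i] rank_le[of d x i]
  by (auto simp: rank_eq_card_ranked_above card_gt_0_iff Suc_le_eq)

lemma rank_less_if_ranked_above:
  assumes "i \<in> {1..d}" and "j \<in> ranked_above d x i" and "i \<notin> ranked_above d x j"
  shows "rank d x j < rank d x i"
proof -
  have "ranked_above d x j \<subseteq> ranked_above d x i"
    using assms(2) by (rule ranked_above_trans)
  moreover have "i \<in> ranked_above d x i"
    using assms(1) by (rule self_in_ranked_above)
  ultimately have "ranked_above d x j \<subset> ranked_above d x i"
    using assms(3) by (metis psubsetI)
  then show ?thesis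
    unfolding rank_eq_card_ranked_above by (rule psubset_card_mono[OF finite_ranked_above])
qed

lemma inj_on_rank: "inj_on (rank d x) {1..d}"
proof (rule inj_onI, rule ccontr)
  fix i j assume i: "i \<in> {1..d}" and j: "j \<in> {1..d}"
    and eq: "rank d x i = rank d x j" and "i \<noteq> j"
  then have "j \<in> ranked_above d x i \<and> i \<notin> ranked_above d x j
      \<or> i \<in> ranked_above d x j \<and> j \<notin> ranked_above d x i"
    unfolding ranked_above_def by auto
  then show False
    using rank_less_if_ranked_above[OF i, of j x] rank_less_if_ranked_above[OF j, of i x] eq
    by auto
qed

lemma bij_betw_rank: "bij_betw (rank d x) {1..d} {1..d}"
proof -
  have "rank d x ` {1..d} \<subseteq> {1..d}" using rank_in_range by blast
  moreover have "card (rank d x ` {1..d}) = card {1..d}"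
    using card_image[OF inj_on_rank] by simp
  ultimately show ?thesis
    using inj_on_rank by (simp add: bij_betw_def card_subset_eq)
qed

lemma TopFeatures_subset: "TopFeatures d x k \<subseteq> {1..d}"
  unfolding TopFeatures_def by blast

lemma finite_TopFeatures: "finite (TopFeatures d x k)"
  using finite_subset[OF TopFeatures_subset] by blast

lemma card_TopFeatures:
  assumes "k \<le> d"
  shows "card (TopFeatures d x k) = k"
proof -
  have "rank d x ` TopFeatures d x k = {1..k}"
  proof
    show "rank d x ` TopFeatures d x k \<subseteq> {1..k}"
      using rank_in_range unfolding TopFeatures_def by fastforce
    show "{1..k} \<subseteq> rank d x ` TopFeatures d x k"
    proof
      fix r assume r: "r \<in> {1..k}"
      then have "r \<in> rank d x ` {1..d}"
        using bij_betw_imp_surj_on[OF bij_betw_rank, of d x] assms by simp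
      then obtain i where "i \<in> {1..d}" "r = rank d x i" by blast
      with r show "r \<in> rank d x ` TopFeatures d x k"
        unfolding TopFeatures_def by auto
    qed
  qed
  moreover have "inj_on (rank d x) (TopFeatures d x k)"
    using inj_on_subset[OF inj_on_rank TopFeatures_subset] .
  ultimately show ?thesis
    using card_image[of "rank d x" "TopFeatures d x k"] by simp
qed

lemma abs_le_psi_sign:
  assumes "k \<le> d" and "j \<in> {1..d} - TopFeatures d e1 k"
  shows "\<bar>e2 j\<bar> \<le> psi_sign d e1 k e2"
proof (cases "k < d")
  case True
  then show ?thesis
    using assms(2) by (simp add: psi_sign_def)
next
  case False
  then have "TopFeatures d e1 k = {1..d}"
    using assms(1) card_TopFeatures[OF assms(1)] TopFeatures_subset
    by (intro card_subset_eq) auto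
  with assms(2) show ?thesis by simp
qed

lemma psi_sign_nonneg:
  assumes "k \<le> d"
  shows "0 \<le> psi_sign d e1 k e2"
proof (cases "k < d")
  case True
  then have "TopFeatures d e1 k \<noteq> {1..d}"
    using card_TopFeatures[OF assms, of e1] by (metis card_atLeastAtMost diff_Suc_1 less_irrefl)
  then obtain j where "j \<in> {1..d} - TopFeatures d e1 k"
    using TopFeatures_subset[of d e1 k] by blast
  then have "\<bar>e2 j\<bar> \<le> psi_sign d e1 k e2"
    by (rule abs_le_psi_sign[OF assms])
  then show ?thesis
    using abs_ge_zero[of "e2 j"] by linarith
next
  case False
  then show ?thesis by (simp add: psi_sign_def)
qed

text \<open>Pigeonhole: an index outside the top k is outranked by more than k indices.\<close>

lemma ex_dominating_index_outside:
  assumes "i \<in> {1..d}" and "i \<notin> TopFeatures d x k" and "finite T" and "card T \<le> k"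
  obtains j where "j \<in> {1..d} - T" and "\<bar>x i\<bar> \<le> \<bar>x j\<bar>"
proof -
  have "card T < card (ranked_above d x i)"
    using assms unfolding TopFeatures_def by (simp add: rank_eq_card_ranked_above)
  then have "\<not> ranked_above d x i \<subseteq> T"
    using card_mono[OF assms(3)] leD by blast
  then obtain j where "j \<in> ranked_above d x i" and "j \<notin> T" by blast
  then show ?thesis
    using that unfolding ranked_above_def by auto
qed

lemma sign_mult_le_abs: "sign x * y \<le> \<bar>y\<bar>"
  unfolding sign_def by auto

lemma sign_mult_nonpos_if_sign_neq: "sign x \<noteq> sign y \<Longrightarrow> sign x * y \<le> 0"
  unfolding sign_def by (auto split: if_splits)

lemma sign_mult_le_psi_sign_if_disagree:
  assumes "k \<le> d" and "i \<in> TopFeatures d e1 k"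
    and "\<not> (i \<in> TopFeatures d e2 k \<and> sign (e1 i) = sign (e2 i))"
  shows "sign (e1 i) * e2 i \<le> psi_sign d e1 k e2"
proof (cases "sign (e1 i) = sign (e2 i)")
  case True
  have "i \<in> {1..d}" using assms(2) TopFeatures_subset by blast
  moreover have "i \<notin> TopFeatures d e2 k" using True assms(3) by blast
  moreover have "card (TopFeatures d e1 k) \<le> k"
    using card_TopFeatures[OF assms(1)] by simp
  ultimately obtain j where "j \<in> {1..d} - TopFeatures d e1 k" and "\<bar>e2 i\<bar> \<le> \<bar>e2 j\<bar>"
    using ex_dominating_index_outside[OF _ _ finite_TopFeatures] by blast
  then have "\<bar>e2 i\<bar> \<le> psi_sign d e1 k e2"
    using abs_le_psi_sign[OF assms(1)] by (meson order_trans)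
  then show ?thesis
    using sign_mult_le_abs[of "e1 i" "e2 i"] by linarith
next
  case False
  then show ?thesis
    using sign_mult_nonpos_if_sign_neq[OF False] psi_sign_nonneg[OF assms(1), of e1 e2] by linarith
qed

lemma mult_card_diff_le_sum:
  fixes f :: "'a \<Rightarrow> 'b::linordered_idom"
  assumes "finite A" and "\<And>i. i \<in> A \<Longrightarrow> 0 \<le> f i" and "\<And>i. i \<in> A - B \<Longrightarrow> c \<le> f i"
  shows "of_nat (card (A - B)) * c \<le> sum f A"
proof -
  have "of_nat (card (A - B)) * c = (\<Sum>i \<in> A - B. c)" by simp
  also have "\<dots> \<le> sum f (A - B)" using assms(3) by (rule sum_mono)
  also have "\<dots> \<le> sum f A" using assms by (intro sum_mono2) auto
  finally show ?thesis .
qed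

theorem lemma3:
  fixes d k :: nat and \<epsilon> :: real and e1 e2 :: "nat \<Rightarrow> real"
  assumes "1 \<le> k" and "k \<le> d" and "\<epsilon> > 0"
  shows "1 - SignAgree d e1 e2 k \<le> (1 / \<epsilon>) * loss_Sgn d \<epsilon> e2 e1 k"
proof -
  define T where "T = TopFeatures d e1 k"
  define agree where "agree = {i \<in> T. i \<in> TopFeatures d e2 k \<and> sign (e1 i) = sign (e2 i)}"
  define hinge where "hinge i = max 0 (psi_sign d e1 k e2 - sign (e1 i) * e2 i + \<epsilon>)" for i
  have "finite T" and "card T = k"
    unfolding T_def using finite_TopFeatures card_TopFeatures[OF assms(2)] by auto
  moreover have "agree \<subseteq> T" unfolding agree_def by blast
  ultimately have card_disagree: "real (card (T - agree)) = real k - real (card agree)"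
    using card_mono[of T agree] by (simp add: card_Diff_subset finite_subset of_nat_diff)
  have "real (card (T - agree)) * \<epsilon> \<le> sum hinge T"
  proof (rule mult_card_diff_le_sum)
    show "\<epsilon> \<le> hinge i" if "i \<in> T - agree" for i
      using that sign_mult_le_psi_sign_if_disagree[OF assms(2)]
      unfolding hinge_def agree_def T_def by fastforce
  qed (use \<open>finite T\<close> in \<open>simp_all add: hinge_def\<close>)
  then have disagree_le: "real (card (T - agree)) \<le> sum hinge T / \<epsilon>"
    using assms(3) by (simp add: pos_le_divide_eq)
  have "{i \<in> {1..d}. i \<in> T \<and> i \<in> TopFeatures d e2 k \<and> sign (e1 i) = sign (e2 i)} = agree"
    using TopFeatures_subset unfolding agree_def T_def by blast
  then have "1 - SignAgree d e1 e2 k = real (card (T - agree)) / real k"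
    using assms(1) card_disagree unfolding SignAgree_def T_def by (simp add: field_simps)
  also have "\<dots> \<le> sum hinge T / \<epsilon> / real k"
    using disagree_le by (rule divide_right_mono) simp
  also have "\<dots> = (1 / \<epsilon>) * loss_Sgn d \<epsilon> e2 e1 k"
    unfolding loss_Sgn_def hinge_def T_def by simp
  finally show ?thesis .
qed

end
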